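(* Let $\ell \geq 2$ and let $\mathcal G \subset \binom{[2\ell]}{\ell}$ be a non-empty non-trivial family. For $r \ge 1$ let $t_r$ be the number of sets $T \in \binom{[2\ell]}{r}$ such that $T \cap G \neq \emptyset$ for all $G \in \mathcal G$. Then for every $2 \leq r < \ell$, $$t_r \leq \binom{2\ell}{r} - 2\binom{\ell}{r}.$$
   Context: A non-empty family is non-trivial if the intersection of all its members is empty. *)

theory Defs
  imports Main
begin

definition t_count :: "nat \<Rightarrow> nat set set \<Rightarrow> nat \<Rightarrow> nat" where
  "t_count l \<G> r = card {T. T \<subseteq> {1..2*l} \<and> card T = r \<and> (\<forall>G\<in>\<G>. T \<inter> G \<noteq> {})}"

end

theory Submission
  imports Defs
begin

text \<open>
  Fix \<open>G\<^sub>1 \<in> \<G>\<close>. Every \<open>r\<close>-subset of the complement of \<open>G\<^sub>1\<close> misses \<open>G\<^sub>1\<close>, which gives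
  \<open>(l choose r)\<close> non-transversals. Since \<open>\<Inter>\<G> = {}\<close>, every \<open>x \<in> G\<^sub>1\<close> lies outside some
  \<open>F x \<in> \<G>\<close>; the \<open>r\<close>-subsets of the complement of \<open>F x\<close> whose least element in \<open>G\<^sub>1\<close> is \<open>x\<close>
  are again non-transversals, disjoint from the first ones and from each other. Classifying the
  \<open>r\<close>-subsets of \<open>G\<^sub>1\<close> by their least element in the same way and comparing class by class
  (the complement of \<open>F x\<close> is as large as \<open>G\<^sub>1\<close>) yields \<open>(l choose r)\<close> further non-transversals.
\<close>

definition subsets_with_least_in :: "'a::linorder set \<Rightarrow> 'a set \<Rightarrow> nat \<Rightarrow> 'a \<Rightarrow> 'a set set" where
  "subsets_with_least_in G A r x =
     {T. T \<subseteq> A \<and> card T = r \<and> x \<in> T \<and> (\<forall>y\<in>T. y \<in> G \<longrightarrow> x \<le> y)}"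

lemma finite_subsets_with_least_in:
  "finite A \<Longrightarrow> finite (subsets_with_least_in G A r x)"
  by (rule finite_subset[of _ "Pow A"]) (auto simp: subsets_with_least_in_def)

lemma subsets_with_least_in_disjoint:
  assumes "x \<in> G" "y \<in> G" "x \<noteq> y"
  shows "subsets_with_least_in G A r x \<inter> subsets_with_least_in G B r y = {}"
  using assms by (auto simp: subsets_with_least_in_def intro: antisym)

lemma card_subsets_with_least_in:
  assumes "finite A" "x \<in> A" "r \<ge> 1"
  shows "card (subsets_with_least_in G A r x) = card (A - insert x {y\<in>G. y < x}) choose (r - 1)"
proof -
  let ?E = "A - insert x {y\<in>G. y < x}"
  let ?U = "{U. U \<subseteq> ?E \<and> card U = r - 1}"
  have "subsets_with_least_in G A r x = insert x ` ?U"
  proof (intro equalityI subsetI)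
    fix T assume T: "T \<in> subsets_with_least_in G A r x"
    then have "T - {x} \<in> ?U" "T = insert x (T - {x})"
      using assms by (auto simp: subsets_with_least_in_def finite_subset)
    then show "T \<in> insert x ` ?U" by blast
  next
    fix T assume "T \<in> insert x ` ?U"
    then obtain U where U: "U \<subseteq> ?E" "card U = r - 1" "T = insert x U" by blast
    have "finite U" "x \<notin> U" using finite_subset[OF U(1)] assms(1) U(1) by auto
    then have "card T = r" using U assms(3) by simp
    then show "T \<in> subsets_with_least_in G A r x"
      using U assms(2) by (auto simp: subsets_with_least_in_def)
  qed
  moreover have "inj_on (insert x) ?U" by (rule inj_onI) auto
  ultimately have "card (subsets_with_least_in G A r x) = card ?U" by (simp add: card_image)
  also have "\<dots> = card ?E choose (r - 1)" using assms(1) by (simp add: n_subsets)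
  finally show ?thesis .
qed

lemma subsets_eq_UN_subsets_with_least_in:
  assumes "finite G" "r \<ge> 1"
  shows "{S. S \<subseteq> G \<and> card S = r} = (\<Union>x\<in>G. subsets_with_least_in G G r x)"
proof (intro equalityI subsetI)
  fix S assume S: "S \<in> {S. S \<subseteq> G \<and> card S = r}"
  then have "S \<noteq> {}" "finite S" using assms finite_subset by auto
  then have "Min S \<in> S" "S \<in> subsets_with_least_in G G r (Min S)"
    using S by (auto simp: subsets_with_least_in_def)
  then show "S \<in> (\<Union>x\<in>G. subsets_with_least_in G G r x)" using S by blast
qed (auto simp: subsets_with_least_in_def)

text \<open>
  The elements of \<open>G\<close> below \<open>x\<close> all lie in \<open>A\<close>, so removing them from \<open>B\<close> costs at most
  as much as removing them from \<open>A\<close>.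
\<close>
lemma card_subsets_with_least_in_mono:
  assumes "finite A" "finite B" "x \<in> A" "x \<in> B" "{y\<in>G. y < x} \<subseteq> A" "card A \<le> card B"
    and "r \<ge> 1"
  shows "card (subsets_with_least_in G A r x) \<le> card (subsets_with_least_in G B r x)"
proof -
  let ?L = "insert x {y\<in>G. y < x}"
  have "finite ?L" using assms(1,5) finite_subset by auto
  have "card (A - ?L) = card A - card ?L"
    using assms(3,5) \<open>finite ?L\<close> by (simp add: card_Diff_subset)
  also have "\<dots> \<le> card B - card ?L" using assms(6) by simp
  also have "\<dots> \<le> card (B - ?L)" using \<open>finite ?L\<close> by (rule diff_card_le_card_Diff)
  finally show ?thesis
    using assms by (simp add: card_subsets_with_least_in binomial_right_mono)
qed

lemma binomial_le_card_UN_subsets_with_least_in: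
  assumes "finite W" "G \<subseteq> W" "r \<ge> 1"
    and F: "\<And>x. x \<in> G \<Longrightarrow> x \<notin> F x \<and> card G \<le> card (W - F x)"
  shows "card G choose r \<le>
    card (\<Union>x\<in>G. subsets_with_least_in G (W - F x) r x)"
proof -
  have "finite G" using assms(1,2) finite_subset by blast
  have "card G choose r = card {S. S \<subseteq> G \<and> card S = r}"
    using \<open>finite G\<close> by (simp add: n_subsets)
  also have "\<dots> = card (\<Union>x\<in>G. subsets_with_least_in G G r x)"
    using \<open>finite G\<close> assms(3) by (simp only: subsets_eq_UN_subsets_with_least_in)
  also have "\<dots> = (\<Sum>x\<in>G. card (subsets_with_least_in G G r x))"
    using \<open>finite G\<close>
    by (intro card_UN_disjoint) (auto simp: finite_subsets_with_least_in subsets_with_least_in_disjoint)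
  also have "\<dots> \<le> (\<Sum>x\<in>G. card (subsets_with_least_in G (W - F x) r x))"
    using \<open>finite G\<close> assms F by (intro sum_mono card_subsets_with_least_in_mono) auto
  also have "\<dots> = card (\<Union>x\<in>G. subsets_with_least_in G (W - F x) r x)"
    using \<open>finite G\<close> assms(1)
    by (intro card_UN_disjoint[symmetric])
       (auto simp: finite_subsets_with_least_in subsets_with_least_in_disjoint)
  finally show ?thesis .
qed

lemma card_non_transversals_ge:
  fixes W :: "'a::linorder set"
  assumes "finite W" "\<And>G. G \<in> \<G> \<Longrightarrow> G \<subseteq> W \<and> card G = k" "2 * k \<le> card W"
    and "\<Inter>\<G> = {}" "r \<ge> 1"
  shows "(card W - k choose r) + (k choose r) \<le>
    card {T. T \<subseteq> W \<and> card T = r \<and> (\<exists>G\<in>\<G>. T \<inter> G = {})}"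
proof -
  have avoid: "\<forall>x. \<exists>G\<in>\<G>. x \<notin> G" using assms(4) by auto
  then obtain G1 where G1: "G1 \<in> \<G>" by blast
  from avoid obtain F where F: "\<And>x. F x \<in> \<G> \<and> x \<notin> F x" by metis
  have card_compl: "card (W - G) = card W - k" if "G \<in> \<G>" for G
    using assms(2)[OF that] finite_subset[OF _ assms(1)] by (simp add: card_Diff_subset)
  let ?P = "{T. T \<subseteq> W - G1 \<and> card T = r}"
  let ?Q = "\<Union>x\<in>G1. subsets_with_least_in G1 (W - F x) r x"
  let ?N = "{T. T \<subseteq> W \<and> card T = r \<and> (\<exists>G\<in>\<G>. T \<inter> G = {})}"
  have "?P \<subseteq> ?N" using G1 by auto
  moreover have "?Q \<subseteq> ?N"
  proof
    fix T assume "T \<in> ?Q"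
    then obtain x where "T \<in> subsets_with_least_in G1 (W - F x) r x" by blast
    then have "T \<subseteq> W" "card T = r" "T \<inter> F x = {}"
      by (auto simp: subsets_with_least_in_def)
    then show "T \<in> ?N" using F[of x] by blast
  qed
  ultimately have "?P \<union> ?Q \<subseteq> ?N" by (rule Un_least)
  moreover have "?P \<inter> ?Q = {}" by (auto simp: subsets_with_least_in_def)
  moreover have "finite ?N" by (rule finite_subset[of _ "Pow W"]) (use assms(1) in auto)
  ultimately have "card ?P + card ?Q \<le> card ?N"
    using finite_subset[of "?P \<union> ?Q" ?N] by (simp add: card_Un_disjoint[symmetric] card_mono)
  moreover have "card ?P = card W - k choose r"
  proof -
    have "finite (W - G1)" using assms(1) by blast
    then have "card ?P = card (W - G1) choose r" by (rule n_subsets)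
    then show ?thesis using card_compl[OF G1] by (simp only:)
  qed
  moreover have "k choose r \<le> card ?Q"
  proof -
    have G1W: "card G1 = k" "G1 \<subseteq> W" using assms(2)[OF G1] by auto
    have "card G1 \<le> card (W - F x)" for x
    proof -
      have "card (W - F x) = card W - k" using card_compl F by blast
      then show ?thesis using assms(3) G1W(1) by linarith
    qed
    then have "card G1 choose r \<le> card ?Q"
      using binomial_le_card_UN_subsets_with_least_in[of W G1 r F] assms(1,5) F G1W(2) by blast
    then show ?thesis using G1W(1) by (simp only:)
  qed
  ultimately show ?thesis by linarith
qed

theorem lemma4p4:
  fixes l r :: nat and \<G> :: "nat set set"
  assumes "l \<ge> 2"
    and "\<forall>G\<in>\<G>. G \<subseteq> {1..2*l} \<and> card G = l"
    and "\<G> \<noteq> {}"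
    and "\<Inter>\<G> = {}"
    and "2 \<le> r" and "r < l"
  shows "int (t_count l \<G> r) \<le> int ((2*l) choose r) - 2 * int (l choose r)"
proof -
  let ?W = "{1..2*l}"
  let ?S = "{T. T \<subseteq> ?W \<and> card T = r}"
  let ?A = "{T. T \<subseteq> ?W \<and> card T = r \<and> (\<forall>G\<in>\<G>. T \<inter> G \<noteq> {})}"
  let ?N = "{T. T \<subseteq> ?W \<and> card T = r \<and> (\<exists>G\<in>\<G>. T \<inter> G = {})}"
  have "finite ?S" by (rule finite_subset[of _ "Pow ?W"]) auto
  then have "finite ?A" "finite ?N" by (auto intro: finite_subset[OF _ \<open>finite ?S\<close>])
  then have "card ?A + card ?N = card (?A \<union> ?N)" by (intro card_Un_disjoint[symmetric]) auto
  also have "?A \<union> ?N = ?S" by auto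
  also have "card ?S = (2*l) choose r" by (simp add: n_subsets)
  finally have "t_count l \<G> r + card ?N = (2*l) choose r" by (simp add: t_count_def)
  moreover have "2 * (l choose r) \<le> card ?N"
    using card_non_transversals_ge[of ?W \<G> l r] assms by simp
  ultimately show ?thesis by linarith
qed

end
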